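(* Let $G$ be a finite simple graph with at least one edge, of order $n$. Then: (i) there exists a mitigating set $S$ of $G$ such that every connected component of the subgraph of $G$ induced by the edge set $S$ is isomorphic to $P_2$ or $P_3$ (the path on $2$ or $3$ vertices); (ii) $\mathrm{es}_{\Delta}(G)\leq n-\alpha(G)$, where $\alpha(G)$ is the independence number of $G$; moreover this bound is sharp, i.e. there exist graphs for which equality holds.
   Context: For a graph $G$ with maximum degree $\Delta(G)$, a set $S\subseteq E(G)$ is a mitigating set if $\Delta(G-S)\leq \Delta(G)-1$. The $\Delta$-edge stability number $\mathrm{es}_{\Delta}(G)$ is the minimum number of edges of $G$ whose removal results in a subgraph $H$ with $\Delta(H)=\Delta(G)-1$, i.e. the minimum size of a mitigating set. The subgraph induced by a set of edges $S$ consists of the edges of $S$ and their endpoints. *)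

theory Defs
  imports Main
begin

definition simple_graph :: "'a set \<Rightarrow> 'a set set \<Rightarrow> bool" where
  "simple_graph V E \<longleftrightarrow> finite V \<and> (\<forall>e\<in>E. e \<subseteq> V \<and> card e = 2)"

definition degree :: "'a set set \<Rightarrow> 'a \<Rightarrow> nat" where
  "degree E v = card {e\<in>E. v \<in> e}"

definition max_degree :: "'a set \<Rightarrow> 'a set set \<Rightarrow> nat" where
  "max_degree V E = Max (degree E ` V)"

definition mitigating :: "'a set \<Rightarrow> 'a set set \<Rightarrow> 'a set set \<Rightarrow> bool" where
  "mitigating V E S \<longleftrightarrow> S \<subseteq> E \<and> max_degree V (E - S) \<le> max_degree V E - 1"

definition es_Delta :: "'a set \<Rightarrow> 'a set set \<Rightarrow> nat" where
  "es_Delta V E = (LEAST k. \<exists>S. mitigating V E S \<and> card S = k)"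

definition independent :: "'a set set \<Rightarrow> 'a set \<Rightarrow> bool" where
  "independent E I \<longleftrightarrow> (\<forall>e\<in>E. \<not> e \<subseteq> I)"

definition independence_number :: "'a set \<Rightarrow> 'a set set \<Rightarrow> nat" where
  "independence_number V E = Max {card I | I. I \<subseteq> V \<and> independent E I}"

definition adjacent :: "'a set set \<Rightarrow> 'a \<Rightarrow> 'a \<Rightarrow> bool" where
  "adjacent E u v \<longleftrightarrow> {u, v} \<in> E"

definition components :: "'a set \<Rightarrow> 'a set set \<Rightarrow> 'a set set" where
  "components V E = {{v \<in> V. (adjacent E)\<^sup>*\<^sup>* u v} | u. u \<in> V}"

definition edge_induced_vertices :: "'a set set \<Rightarrow> 'a set" where
  "edge_induced_vertices S = \<Union>S"

definition graph_iso :: "'a set \<Rightarrow> 'a set set \<Rightarrow> 'b set \<Rightarrow> 'b set set \<Rightarrow> bool" where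
  "graph_iso V1 E1 V2 E2 \<longleftrightarrow> (\<exists>f. bij_betw f V1 V2 \<and>
      (\<forall>u\<in>V1. \<forall>v\<in>V1. {u, v} \<in> E1 \<longleftrightarrow> {f u, f v} \<in> E2))"

definition path_vertices :: "nat \<Rightarrow> nat set" where
  "path_vertices k = {0..<k}"

definition path_edges :: "nat \<Rightarrow> nat set set" where
  "path_edges k = {{i, Suc i} | i. Suc i < k}"

end

theory Submission
  imports Defs
begin

(* Let M be the set of vertices of maximum degree D >= 1. Every vertex of M has D neighbours
   and no vertex has more, so by double counting Hall's condition holds and the vertices of M
   can be matched injectively to neighbours, v |-> f v. Any edge set covering M is mitigating.
   A minimum subset of the edges {v, f v} covering M has, by minimality, an endpoint of degree
   one on every edge and, by injectivity of f, maximum degree two; hence its components are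
   stars with one or two leaves, that is P_2 or P_3.
   For a maximum independent set I, f maps M \<inter> I out of I, so the edges {v, f v} with
   v \<in> M \<inter> I or v \<in> M - I - f (M \<inter> I) cover M and number at most |V - I| = n - \<alpha>(G).
   Equality holds for K_2. *)


definition Hall_condition :: "('a \<Rightarrow> 'b set) \<Rightarrow> 'a set \<Rightarrow> bool" where
  "Hall_condition R A \<longleftrightarrow> (\<forall>a\<in>A. finite (R a)) \<and> (\<forall>X\<subseteq>A. card X \<le> card (\<Union>(R ` X)))"

lemma Hall_condition_subset: "Hall_condition R A \<Longrightarrow> X \<subseteq> A \<Longrightarrow> Hall_condition R X"
  unfolding Hall_condition_def by blast

lemma Hall_condition_Diff_critical:
  fixes R :: "'a \<Rightarrow> 'b set"
  assumes "finite A" and Hall: "Hall_condition R A"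
    and X: "X \<subseteq> A" "card (\<Union>(R ` X)) = card X"
  shows "Hall_condition (\<lambda>a. R a - \<Union>(R ` X)) (A - X)"
  unfolding Hall_condition_def
proof (intro conjI ballI allI impI)
  show "finite (R a - \<Union>(R ` X))" if "a \<in> A - X" for a
    using Hall that by (simp add: Hall_condition_def)
  fix Y
  assume Y: "Y \<subseteq> A - X"
  have XY: "X \<union> Y \<subseteq> A"
    using X(1) Y by blast
  then have "finite X" "finite Y"
    using \<open>finite A\<close> by (auto dest: finite_subset)
  have "finite (\<Union>(R ` (X \<union> Y)))"
    using XY Hall \<open>finite X\<close> \<open>finite Y\<close> by (auto simp: Hall_condition_def)
  moreover have sub: "\<Union>(R ` X) \<subseteq> \<Union>(R ` (X \<union> Y))"
    by blast
  ultimately have "card (\<Union>(R ` (X \<union> Y)) - \<Union>(R ` X)) = card (\<Union>(R ` (X \<union> Y))) - card X"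
    using X(2) card_Diff_subset[OF finite_subset[OF sub] sub] by simp
  moreover have "\<Union>((\<lambda>a. R a - \<Union>(R ` X)) ` Y) = \<Union>(R ` (X \<union> Y)) - \<Union>(R ` X)"
    by blast
  moreover have "card (X \<union> Y) = card X + card Y"
    using \<open>finite X\<close> \<open>finite Y\<close> Y by (intro card_Un_disjoint) auto
  moreover have "card (X \<union> Y) \<le> card (\<Union>(R ` (X \<union> Y)))"
    using Hall XY unfolding Hall_condition_def by blast
  ultimately show "card Y \<le> card (\<Union>((\<lambda>a. R a - \<Union>(R ` X)) ` Y))"
    by simp
qed

lemma Hall_condition_Diff_singleton:
  fixes R :: "'a \<Rightarrow> 'b set"
  assumes Hall: "Hall_condition R A"
    and no_critical: "\<not> (\<exists>X. X \<subseteq> A \<and> X \<noteq> {} \<and> X \<noteq> A \<and> card (\<Union>(R ` X)) = card X)"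
    and "a \<in> A"
  shows "Hall_condition (\<lambda>x. R x - {b}) (A - {a})"
  unfolding Hall_condition_def
proof (intro conjI ballI allI impI)
  show "finite (R x - {b})" if "x \<in> A - {a}" for x
    using Hall that by (simp add: Hall_condition_def)
  fix Y
  assume Y: "Y \<subseteq> A - {a}"
  show "card Y \<le> card (\<Union>((\<lambda>x. R x - {b}) ` Y))"
  proof (cases "Y = {}")
    case False
    have "Y \<subseteq> A" "Y \<noteq> A"
      using Y \<open>a \<in> A\<close> by auto
    then have "card (\<Union>(R ` Y)) \<noteq> card Y"
      using no_critical False by blast
    moreover have "card Y \<le> card (\<Union>(R ` Y))"
      using Hall \<open>Y \<subseteq> A\<close> unfolding Hall_condition_def by blast
    ultimately have "card Y < card (\<Union>(R ` Y))"
      by linarith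
    moreover have "card (\<Union>(R ` Y)) - 1 \<le> card (\<Union>(R ` Y) - {b})"
      using diff_card_le_card_Diff[of "{b}"] by simp
    moreover have "\<Union>((\<lambda>x. R x - {b}) ` Y) = \<Union>(R ` Y) - {b}"
      by blast
    ultimately show ?thesis by simp
  qed simp
qed

lemma distinct_representatives_Un:
  assumes "X \<subseteq> A" "inj_on f1 X" "\<forall>a\<in>X. f1 a \<in> R a"
    and "inj_on f2 (A - X)" "\<forall>a\<in>A - X. f2 a \<in> R a - \<Union>(R ` X)"
  shows "\<exists>f. inj_on f A \<and> (\<forall>a\<in>A. f a \<in> R a)"
proof -
  define f where "f a = (if a \<in> X then f1 a else f2 a)" for a
  have "inj_on f (X \<union> (A - X))"
    unfolding inj_on_Un
  proof (intro conjI)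
    show "inj_on f X"
      using assms(2) inj_on_cong[of X f f1] by (simp add: f_def)
    show "inj_on f (A - X)"
      using assms(4) inj_on_cong[of "A - X" f f2] by (simp add: f_def)
    show "f ` (X - (A - X)) \<inter> f ` (A - X - X) = {}"
      using assms(3,5) by (fastforce simp: f_def)
  qed
  moreover have "X \<union> (A - X) = A"
    using assms(1) by blast
  moreover have "\<forall>a\<in>A. f a \<in> R a"
    using assms(3,5) by (simp add: f_def)
  ultimately show ?thesis
    by auto
qed

lemma distinct_representatives_insert:
  assumes "a \<in> A" "b \<in> R a" "inj_on f (A - {a})" "\<forall>x\<in>A - {a}. f x \<in> R x - {b}"
  shows "\<exists>g. inj_on g A \<and> (\<forall>x\<in>A. g x \<in> R x)"
proof (intro exI conjI)
  have "inj_on (f(a := b)) (A - {a})"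
    using assms(3) inj_on_cong[of "A - {a}" "f(a := b)" f] by simp
  moreover have "b \<notin> (f(a := b)) ` (A - {a})"
    using assms(4) by auto
  ultimately have "inj_on (f(a := b)) (insert a (A - {a}))"
    by (subst inj_on_insert) simp
  then show "inj_on (f(a := b)) A"
    using assms(1) by (simp add: insert_absorb)
  show "\<forall>x\<in>A. (f(a := b)) x \<in> R x"
    using assms(2,4) by simp
qed

(* Halmos-Vaughan: if some nonempty proper X \<subseteq> A is critical (exactly card X candidates), match
   X and then A - X avoiding the candidates of X; otherwise any candidate b of any a \<in> A can be
   fixed, since removing b keeps Hall's condition on A - {a}. *)
theorem Hall_marriage:
  assumes "finite A" "Hall_condition R A"
  shows "\<exists>f. inj_on f A \<and> (\<forall>a\<in>A. f a \<in> R a)"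
  using assms
proof (induction "card A" arbitrary: A R rule: less_induct)
  case less
  show ?case
  proof (cases "\<exists>X. X \<subseteq> A \<and> X \<noteq> {} \<and> X \<noteq> A \<and> card (\<Union>(R ` X)) = card X")
    case True
    then obtain X where X: "X \<subseteq> A" "X \<noteq> {}" "X \<noteq> A" "card (\<Union>(R ` X)) = card X"
      by blast
    have "X \<subset> A" "A - X \<subset> A"
      using X(1-3) by blast+
    then have "card X < card A" "card (A - X) < card A"
      using psubset_card_mono[OF less.prems(1)] by blast+
    moreover have "finite X" "finite (A - X)"
      using X(1) less.prems(1) by (auto intro: finite_subset)
    ultimately obtain f1 f2
      where "inj_on f1 X" "\<forall>a\<in>X. f1 a \<in> R a"
        and "inj_on f2 (A - X)" "\<forall>a\<in>A - X. f2 a \<in> R a - \<Union>(R ` X)"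
      using less.hyps[of X R] less.hyps[of "A - X" "\<lambda>a. R a - \<Union>(R ` X)"]
        Hall_condition_subset[OF less.prems(2) X(1)] Hall_condition_Diff_critical[OF less.prems X(1,4)]
      by blast
    then show ?thesis
      by (rule distinct_representatives_Un[OF X(1)])
  next
    case no_critical: False
    show ?thesis
    proof (cases "A = {}")
      case False
      then obtain a where a: "a \<in> A"
        by blast
      then have "card {a} \<le> card (R a)"
        using less.prems(2) by (auto simp: Hall_condition_def)
      then obtain b where b: "b \<in> R a"
        by fastforce
      obtain f where "inj_on f (A - {a})" "\<forall>x\<in>A - {a}. f x \<in> R x - {b}"
        using less.hyps[OF card_Diff1_less[OF less.prems(1) a]] less.prems(1)
          Hall_condition_Diff_singleton[OF less.prems(2) no_critical a] by blast
      then show ?thesis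
        by (rule distinct_representatives_insert[of a A b R, OF a b])
    qed simp
  qed
qed

lemma card_le_card_UN_if_regular:
  fixes N :: "'a \<Rightarrow> 'b set"
  assumes "finite X" "finite (\<Union>(N ` X))" "d > 0"
    and "\<And>v. v \<in> X \<Longrightarrow> card (N v) = d"
    and "\<And>y. y \<in> \<Union>(N ` X) \<Longrightarrow> card {v \<in> X. y \<in> N v} \<le> d"
  shows "card X \<le> card (\<Union>(N ` X))"
proof -
  define Y where "Y = \<Union>(N ` X)"
  have "d * card X = (\<Sum>v\<in>X. card (N v))"
    using assms(4) by simp
  also have "\<dots> = (\<Sum>v\<in>X. \<Sum>y\<in>Y. of_bool (y \<in> N v))"
  proof (rule sum.cong)
    fix v
    assume "v \<in> X"
    then have "Y \<inter> N v = N v"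
      by (auto simp: Y_def)
    then show "card (N v) = (\<Sum>y\<in>Y. of_bool (y \<in> N v))"
      using assms(2) by (simp add: Y_def)
  qed simp
  also have "\<dots> = (\<Sum>y\<in>Y. \<Sum>v\<in>X. of_bool (y \<in> N v))"
    by (rule sum.swap)
  also have "\<dots> = (\<Sum>y\<in>Y. card {v \<in> X. y \<in> N v})"
    using assms(1) by (simp add: Collect_conj_eq Int_commute)
  also have "\<dots> \<le> d * card Y"
    using sum_bounded_above[of Y "\<lambda>y. card {v \<in> X. y \<in> N v}" d] assms(5)
    by (simp add: Y_def mult.commute)
  finally show ?thesis
    using \<open>d > 0\<close> by (simp add: Y_def)
qed

lemma path_edges_2: "path_edges 2 = {{0, 1}}"
  by (auto simp: path_edges_def)

lemma path_edges_3: "path_edges 3 = {{0, 1}, {1, 2}}"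
  by (auto simp: path_edges_def less_Suc_eq)

lemma graph_iso_path_2:
  assumes "a \<noteq> b"
  shows "graph_iso {a, b} {{a, b}} (path_vertices 2) (path_edges 2)"
  unfolding graph_iso_def
proof (intro exI conjI)
  let ?g = "\<lambda>x. if x = a then 0 else 1 :: nat"
  show "bij_betw ?g {a, b} (path_vertices 2)"
    using assms by (auto simp: bij_betw_def path_vertices_def)
  show "\<forall>u\<in>{a, b}. \<forall>v\<in>{a, b}. {u, v} \<in> {{a, b}} \<longleftrightarrow> {?g u, ?g v} \<in> path_edges 2"
    using assms by (auto simp: path_edges_2 doubleton_eq_iff)
qed

lemma graph_iso_path_3:
  assumes "a \<noteq> b" "b \<noteq> c" "a \<noteq> c"
  shows "graph_iso {a, b, c} {{a, b}, {b, c}} (path_vertices 3) (path_edges 3)"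
  unfolding graph_iso_def
proof (intro exI conjI)
  let ?g = "\<lambda>x. if x = a then 0 else if x = b then 1 else 2 :: nat"
  show "bij_betw ?g {a, b, c} (path_vertices 3)"
    using assms by (auto simp: bij_betw_def path_vertices_def)
  show "\<forall>u\<in>{a, b, c}. \<forall>v\<in>{a, b, c}.
          {u, v} \<in> {{a, b}, {b, c}} \<longleftrightarrow> {?g u, ?g v} \<in> path_edges 3"
    using assms by (auto simp: path_edges_3 doubleton_eq_iff)
qed

definition neighbours :: "'a set set \<Rightarrow> 'a \<Rightarrow> 'a set" where
  "neighbours E v = {u. adjacent E v u}"

lemma mem_neighbours_iff: "u \<in> neighbours E v \<longleftrightarrow> {v, u} \<in> E"
  by (simp add: neighbours_def adjacent_def)

lemma adjacent_iff_mem_neighbours: "adjacent E v u \<longleftrightarrow> u \<in> neighbours E v"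
  by (simp add: neighbours_def)

lemma neighbours_sym: "u \<in> neighbours E v \<Longrightarrow> v \<in> neighbours E u"
  by (simp add: mem_neighbours_iff insert_commute)

lemma card_2_obtain_other:
  assumes "card e = 2" "v \<in> e"
  obtains u where "e = {v, u}" "u \<noteq> v"
  using assms by (auto simp: card_2_iff)

lemma not_mem_neighbours_self:
  assumes "\<forall>e\<in>E. card e = 2"
  shows "v \<notin> neighbours E v"
  using assms by (auto simp: mem_neighbours_iff)

lemma mem_Union_iff_neighbours_ne:
  assumes "\<forall>e\<in>E. card e = 2"
  shows "v \<in> \<Union>E \<longleftrightarrow> neighbours E v \<noteq> {}"
proof
  assume "v \<in> \<Union>E"
  then obtain e where "e \<in> E" "v \<in> e" by blast
  moreover obtain u where "e = {v, u}"
    using card_2_obtain_other[of e v] assms \<open>e \<in> E\<close> \<open>v \<in> e\<close> by blast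
  ultimately show "neighbours E v \<noteq> {}"
    by (auto simp: mem_neighbours_iff)
qed (auto simp: mem_neighbours_iff)

lemma neighbours_eq_singleton_if_private:
  assumes "{a, b} \<in> S" "a \<notin> \<Union>(S - {{a, b}})"
  shows "neighbours S a = {b}"
  using assms by (auto simp: mem_neighbours_iff doubleton_eq_iff)

lemma ex_star_centre:
  assumes pendant: "\<And>a b. {a, b} \<in> S \<Longrightarrow> neighbours S a = {b} \<or> neighbours S b = {a}"
    and "neighbours S u \<noteq> {}"
  obtains c where "u = c \<or> u \<in> neighbours S c" "neighbours S c \<noteq> {}"
    "\<forall>y\<in>neighbours S c. neighbours S y = {c}"
proof (cases "\<forall>y\<in>neighbours S u. neighbours S y = {u}")
  case True
  then show ?thesis using that assms(2) by blast
next
  case False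
  then obtain z where z: "z \<in> neighbours S u" "neighbours S z \<noteq> {u}" by blast
  then have "neighbours S u = {z}"
    using pendant[of u z] by (simp add: mem_neighbours_iff)
  have "u \<in> neighbours S z"
    using z(1) by (rule neighbours_sym)
  have "neighbours S y = {z}" if y: "y \<in> neighbours S z" for y
  proof (cases "y = u")
    case False
    then have "neighbours S z \<noteq> {y}"
      using \<open>u \<in> neighbours S z\<close> by auto
    then show ?thesis
      using pendant[of z y] y by (simp add: mem_neighbours_iff)
  qed (use \<open>neighbours S u = {z}\<close> in simp)
  then show ?thesis
    using that[of z] \<open>u \<in> neighbours S z\<close> z(1) by blast
qed

lemma component_of_star:
  assumes two: "\<forall>e\<in>S. card e = 2"
    and star: "neighbours S c \<noteq> {}" "\<forall>y\<in>neighbours S c. neighbours S y = {c}"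
    and u: "u = c \<or> u \<in> neighbours S c"
  shows "{v \<in> \<Union>S. (adjacent S)\<^sup>*\<^sup>* u v} = insert c (neighbours S c)"
proof (intro equalityI subsetI)
  fix v
  assume "v \<in> {v \<in> \<Union>S. (adjacent S)\<^sup>*\<^sup>* u v}"
  then have "(adjacent S)\<^sup>*\<^sup>* u v" by blast
  then show "v \<in> insert c (neighbours S c)"
  proof (induction rule: rtranclp_induct)
    case (step y z)
    then have "z \<in> neighbours S y"
      by (simp add: adjacent_iff_mem_neighbours)
    then show ?case
      using step.IH star(2) by auto
  qed (use u in blast)
next
  fix v
  assume v: "v \<in> insert c (neighbours S c)"
  have "(adjacent S)\<^sup>*\<^sup>* u c"
  proof (cases "u = c")
    case False
    then have "adjacent S u c"
      using u neighbours_sym by (auto simp: adjacent_iff_mem_neighbours)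
    then show ?thesis by (rule r_into_rtranclp)
  qed simp
  moreover have "(adjacent S)\<^sup>*\<^sup>* c v"
  proof (cases "v = c")
    case False
    then have "adjacent S c v"
      using v by (simp add: adjacent_iff_mem_neighbours)
    then show ?thesis by (rule r_into_rtranclp)
  qed simp
  moreover have "neighbours S v \<noteq> {}"
    using v star by auto
  then have "v \<in> \<Union>S"
    using mem_Union_iff_neighbours_ne[OF two] by blast
  ultimately show "v \<in> {v \<in> \<Union>S. (adjacent S)\<^sup>*\<^sup>* u v}"
    using rtranclp_trans[of "adjacent S" u c v] by blast
qed

lemma edges_within_star:
  assumes two: "\<forall>e\<in>S. card e = 2"
    and star: "\<forall>y\<in>neighbours S c. neighbours S y = {c}"
  shows "{e \<in> S. e \<subseteq> insert c (neighbours S c)} = (\<lambda>y. {c, y}) ` neighbours S c"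
proof (intro equalityI subsetI)
  fix e
  assume e: "e \<in> {e \<in> S. e \<subseteq> insert c (neighbours S c)}"
  then have "card e = 2"
    using two by blast
  then obtain x y where xy: "e = {x, y}" "x \<noteq> y"
    by (auto simp: card_2_iff)
  moreover have "y \<in> neighbours S x"
    using e xy by (simp add: mem_neighbours_iff)
  ultimately have "x = c \<or> y = c"
    using e star by auto
  then show "e \<in> (\<lambda>y. {c, y}) ` neighbours S c"
    using e xy by (auto simp: mem_neighbours_iff insert_commute)
qed (auto simp: mem_neighbours_iff)

lemma subset_doubleton_cases:
  assumes "A \<subseteq> {p, q}" "A \<noteq> {}"
  obtains a where "A = {a}" | a b where "a \<noteq> b" "A = {a, b}"
  using assms by (cases "p \<in> A"; cases "q \<in> A"; cases "p = q") auto

lemma component_iso_path_2_or_3: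
  assumes two: "\<forall>e\<in>S. card e = 2"
    and pendant: "\<And>a b. {a, b} \<in> S \<Longrightarrow> neighbours S a = {b} \<or> neighbours S b = {a}"
    and degree_le_2: "\<And>x. \<exists>p q. neighbours S x \<subseteq> {p, q}"
    and C: "C \<in> components (edge_induced_vertices S) S"
  shows "graph_iso C {e \<in> S. e \<subseteq> C} (path_vertices 2) (path_edges 2) \<or>
         graph_iso C {e \<in> S. e \<subseteq> C} (path_vertices 3) (path_edges 3)"
proof -
  obtain u where u: "u \<in> \<Union>S" and C_eq: "C = {v \<in> \<Union>S. (adjacent S)\<^sup>*\<^sup>* u v}"
    using C by (auto simp: components_def edge_induced_vertices_def)
  obtain c where c: "u = c \<or> u \<in> neighbours S c" "neighbours S c \<noteq> {}"
    "\<forall>y\<in>neighbours S c. neighbours S y = {c}"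
    using ex_star_centre[OF pendant] u mem_Union_iff_neighbours_ne[OF two] by blast
  have C_star: "C = insert c (neighbours S c)"
    using component_of_star[OF two c(2,3,1)] C_eq by simp
  have edges: "{e \<in> S. e \<subseteq> C} = (\<lambda>y. {c, y}) ` neighbours S c"
    using edges_within_star[OF two c(3)] C_star by simp
  have "c \<notin> neighbours S c"
    using not_mem_neighbours_self[OF two] .
  obtain p q where "neighbours S c \<subseteq> {p, q}"
    using degree_le_2 by blast
  from this c(2) show ?thesis
  proof (cases rule: subset_doubleton_cases)
    case (1 a)
    then show ?thesis
      using graph_iso_path_2[of c a] \<open>c \<notin> neighbours S c\<close> C_star edges by auto
  next
    case (2 a b)
    then have "graph_iso {a, c, b} {{a, c}, {c, b}} (path_vertices 3) (path_edges 3)"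
      using \<open>c \<notin> neighbours S c\<close> by (intro graph_iso_path_3) auto
    moreover have "C = {a, c, b}" "{e \<in> S. e \<subseteq> C} = {{a, c}, {c, b}}"
      using 2 C_star edges by (auto simp: insert_commute)
    ultimately show ?thesis by simp
  qed
qed

lemma neighbours_subset_doubleton_if_inj:
  assumes "inj_on f M" "S \<subseteq> (\<lambda>v. {v, f v}) ` M"
  shows "\<exists>p q. neighbours S x \<subseteq> {p, q}"
proof -
  \<comment> \<open>the neighbours of x are f x and the unique preimage of x under f, if any\<close>
  obtain q where q: "\<forall>v\<in>M. f v = x \<longrightarrow> v = q"
    using assms(1) by (metis inj_on_def)
  have "neighbours S x \<subseteq> {f x, q}"
  proof
    fix y
    assume "y \<in> neighbours S x"
    then obtain v where "v \<in> M" "{x, y} = {v, f v}"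
      using assms(2) by (auto simp: mem_neighbours_iff)
    then show "y \<in> {f x, q}"
      using q by (auto simp: doubleton_eq_iff)
  qed
  then show ?thesis by blast
qed

lemma pendant_if_minimal_cover:
  assumes "M \<subseteq> \<Union>S" and minimal: "\<And>e. e \<in> S \<Longrightarrow> \<not> M \<subseteq> \<Union>(S - {e})" and ab: "{a, b} \<in> S"
  shows "neighbours S a = {b} \<or> neighbours S b = {a}"
proof -
  obtain v where v: "v \<in> M" "v \<notin> \<Union>(S - {{a, b}})"
    using minimal[OF ab] by blast
  moreover have "v \<in> \<Union>S"
    using assms(1) v(1) by blast
  ultimately have "v = a \<or> v = b"
    by blast
  then show ?thesis
  proof
    assume "v = a"
    then show ?thesis
      using neighbours_eq_singleton_if_private[OF ab] v(2) by blast
  next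
    assume "v = b"
    then show ?thesis
      using neighbours_eq_singleton_if_private[of b a S] ab v(2) by (simp add: insert_commute)
  qed
qed

lemma ex_cover_with_path_components:
  assumes "finite M" "inj_on f M" "\<And>v. v \<in> M \<Longrightarrow> f v \<noteq> v"
  shows "\<exists>S \<subseteq> (\<lambda>v. {v, f v}) ` M. M \<subseteq> \<Union>S \<and>
           (\<forall>C \<in> components (edge_induced_vertices S) S.
              graph_iso C {e \<in> S. e \<subseteq> C} (path_vertices 2) (path_edges 2) \<or>
              graph_iso C {e \<in> S. e \<subseteq> C} (path_vertices 3) (path_edges 3))"
proof -
  define F where "F = (\<lambda>v. {v, f v}) ` M"
  define covers where "covers T \<longleftrightarrow> T \<subseteq> F \<and> M \<subseteq> \<Union>T" for T
  obtain S where S: "covers S" and minimum: "\<And>T. covers T \<Longrightarrow> card S \<le> card T"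
    using ex_has_least_nat[of covers F card] by (auto simp: covers_def F_def)
  have "finite S"
    using S assms(1) by (auto simp: covers_def F_def intro: finite_subset)
  have minimal: "\<not> M \<subseteq> \<Union>(S - {e})" if "e \<in> S" for e
  proof -
    have "\<not> covers (S - {e})"
      using minimum[of "S - {e}"] card_Diff1_less[OF \<open>finite S\<close> that] by linarith
    then show ?thesis
      using S by (auto simp: covers_def)
  qed
  have two: "\<forall>e\<in>S. card e = 2"
  proof
    fix e
    assume "e \<in> S"
    then obtain v where "v \<in> M" "e = {v, f v}"
      using S by (auto simp: covers_def F_def)
    then show "card e = 2"
      using assms(3)[of v] by simp
  qed
  have "M \<subseteq> \<Union>S"
    using S by (simp add: covers_def)
  have "\<exists>p q. neighbours S x \<subseteq> {p, q}" for x
    using neighbours_subset_doubleton_if_inj[OF assms(2)] S by (simp add: covers_def F_def)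
  then show ?thesis
    using S component_iso_path_2_or_3[OF two pendant_if_minimal_cover[OF \<open>M \<subseteq> \<Union>S\<close> minimal]]
    by (auto simp: covers_def F_def)
qed

lemma ex_cover_card_le_card_Diff:
  assumes "finite V" "inj_on f M" "M \<subseteq> V" "f ` M \<subseteq> V" "\<And>v. v \<in> M \<inter> I \<Longrightarrow> f v \<notin> I"
  shows "\<exists>S \<subseteq> (\<lambda>v. {v, f v}) ` M. M \<subseteq> \<Union>S \<and> card S \<le> card (V - I)"
proof -
  \<comment> \<open>f is injective on M \<inter> I and maps it into V - I, disjointly from R\<close>
  define R where "R = M - I - f ` (M \<inter> I)"
  define S where "S = (\<lambda>v. {v, f v}) ` (M \<inter> I \<union> R)"
  have "M \<subseteq> \<Union>S"
    by (auto simp: S_def R_def)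
  have "finite M"
    using assms(1,3) by (rule finite_subset[rotated])
  have "card S \<le> card (M \<inter> I) + card R"
    unfolding S_def by (rule order_trans[OF card_image_le]) (simp_all add: \<open>finite M\<close> R_def card_Un_le)
  also have "\<dots> = card (f ` (M \<inter> I)) + card R"
    using assms(2) by (simp add: card_image inj_on_subset)
  also have "\<dots> = card (f ` (M \<inter> I) \<union> R)"
    using \<open>finite M\<close> by (intro card_Un_disjoint[symmetric]) (auto simp: R_def)
  also have "\<dots> \<le> card (V - I)"
    using assms by (intro card_mono) (auto simp: R_def)
  finally have "card S \<le> card (V - I)" .
  moreover have "S \<subseteq> (\<lambda>v. {v, f v}) ` M"
    by (auto simp: S_def R_def)
  ultimately show ?thesis
    using \<open>M \<subseteq> \<Union>S\<close> by blast
qed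

lemma degree_eq_card_neighbours:
  assumes "\<forall>e\<in>E. card e = 2"
  shows "degree E v = card (neighbours E v)"
proof -
  have "{e \<in> E. v \<in> e} = (\<lambda>u. {v, u}) ` neighbours E v"
  proof (intro equalityI subsetI)
    fix e
    assume e: "e \<in> {e \<in> E. v \<in> e}"
    then obtain x y where "e = {x, y}"
      using assms by (auto simp: card_2_iff)
    then have "e = {v, if v = x then y else x}"
      using e by auto
    then show "e \<in> (\<lambda>u. {v, u}) ` neighbours E v"
      using e by (auto simp: mem_neighbours_iff)
  qed (auto simp: mem_neighbours_iff)
  moreover have "inj_on (\<lambda>u. {v, u}) (neighbours E v)"
    by (auto simp: inj_on_def doubleton_eq_iff)
  ultimately show ?thesis
    by (simp add: degree_def card_image)
qed

lemma simple_graph_finite_edges: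
  assumes "simple_graph V E"
  shows "finite E"
proof (rule finite_subset)
  show "E \<subseteq> Pow V" "finite (Pow V)"
    using assms by (auto simp: simple_graph_def)
qed

lemma degree_le_max_degree: "finite V \<Longrightarrow> v \<in> V \<Longrightarrow> degree E v \<le> max_degree V E"
  by (simp add: max_degree_def)

definition max_degree_vertices :: "'a set \<Rightarrow> 'a set set \<Rightarrow> 'a set" where
  "max_degree_vertices V E = {v \<in> V. degree E v = max_degree V E}"

lemma mitigating_if_covers_max_degree_vertices:
  assumes "finite V" "V \<noteq> {}" "finite E" "S \<subseteq> E" "max_degree_vertices V E \<subseteq> \<Union>S"
  shows "mitigating V E S"
proof -
  have less: "degree (E - S) v < max_degree V E" if v: "v \<in> V" for v
  proof (cases "v \<in> max_degree_vertices V E")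
    case True
    then obtain e where "e \<in> S" "v \<in> e"
      using assms(5) by blast
    then have "{e \<in> E - S. v \<in> e} \<subset> {e \<in> E. v \<in> e}"
      using assms(4) by blast
    then have "degree (E - S) v < degree E v"
      unfolding degree_def using assms(3) by (simp add: psubset_card_mono)
    then show ?thesis
      using True by (simp add: max_degree_vertices_def)
  next
    case False
    have "degree (E - S) v \<le> degree E v"
      unfolding degree_def using assms(3) by (intro card_mono) auto
    then show ?thesis
      using False v degree_le_max_degree[OF assms(1) v, of E]
      by (simp add: max_degree_vertices_def)
  qed
  have "\<forall>v\<in>V. degree (E - S) v \<le> max_degree V E - 1"
    using less by fastforce
  then show ?thesis
    using assms by (simp add: mitigating_def max_degree_def[of V "E - S"])
qed

lemma neighbours_subset_vertices:
  assumes "simple_graph V E"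
  shows "neighbours E v \<subseteq> V"
proof
  fix u
  assume "u \<in> neighbours E v"
  then have "{v, u} \<in> E"
    by (simp add: mem_neighbours_iff)
  then show "u \<in> V"
    using assms by (auto simp: simple_graph_def)
qed

lemma finite_neighbours:
  assumes "simple_graph V E"
  shows "finite (neighbours E v)"
  using neighbours_subset_vertices[OF assms] by (rule finite_subset) (use assms in \<open>simp add: simple_graph_def\<close>)

lemma max_degree_pos:
  assumes "simple_graph V E" "E \<noteq> {}"
  shows "max_degree V E > 0"
proof -
  have "finite V" and two: "\<forall>e\<in>E. card e = 2"
    using assms(1) by (auto simp: simple_graph_def)
  obtain e where "e \<in> E"
    using assms(2) by blast
  then obtain a b where ab: "{a, b} \<in> E"
    using two by (auto simp: card_2_iff)
  then have "a \<in> V"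
    using assms(1) by (auto simp: simple_graph_def)
  have "b \<in> neighbours E a"
    using ab by (simp add: mem_neighbours_iff)
  then have "card (neighbours E a) > 0"
    using finite_neighbours[OF assms(1)] card_gt_0_iff by blast
  then show ?thesis
    using degree_le_max_degree[OF \<open>finite V\<close> \<open>a \<in> V\<close>, of E]
    by (simp add: degree_eq_card_neighbours[OF two])
qed

lemma Hall_condition_max_degree_vertices:
  assumes G: "simple_graph V E" "E \<noteq> {}"
  shows "Hall_condition (neighbours E) (max_degree_vertices V E)"
  unfolding Hall_condition_def
proof (intro conjI ballI allI impI)
  have "finite V" and two: "\<forall>e\<in>E. card e = 2"
    using G(1) by (auto simp: simple_graph_def)
  show "finite (neighbours E v)" for v
    using finite_neighbours[OF G(1)] .
  fix X
  assume X: "X \<subseteq> max_degree_vertices V E"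
  show "card X \<le> card (\<Union>(neighbours E ` X))"
  proof (rule card_le_card_UN_if_regular)
    have "X \<subseteq> V"
      using X by (auto simp: max_degree_vertices_def)
    then show "finite X"
      using \<open>finite V\<close> by (rule finite_subset)
    then show "finite (\<Union>(neighbours E ` X))"
      by (simp add: finite_neighbours[OF G(1)])
    show "max_degree V E > 0"
      using max_degree_pos[OF G] .
    show "card (neighbours E v) = max_degree V E" if "v \<in> X" for v
      using that X by (auto simp: max_degree_vertices_def degree_eq_card_neighbours[OF two])
    show "card {v \<in> X. y \<in> neighbours E v} \<le> max_degree V E" if "y \<in> \<Union>(neighbours E ` X)" for y
    proof -
      have "y \<in> V"
        using that neighbours_subset_vertices[OF G(1)] by blast
      have "{v \<in> X. y \<in> neighbours E v} \<subseteq> neighbours E y"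
        by (blast intro: neighbours_sym)
      then have "card {v \<in> X. y \<in> neighbours E v} \<le> card (neighbours E y)"
        using finite_neighbours[OF G(1)] by (rule card_mono[rotated])
      also have "\<dots> \<le> max_degree V E"
        using degree_le_max_degree[OF \<open>finite V\<close> \<open>y \<in> V\<close>, of E]
        by (simp add: degree_eq_card_neighbours[OF two])
      finally show ?thesis .
    qed
  qed
qed

lemma ex_inj_neighbour_on_max_degree_vertices:
  assumes "simple_graph V E" "E \<noteq> {}"
  shows "\<exists>f. inj_on f (max_degree_vertices V E) \<and> (\<forall>v\<in>max_degree_vertices V E. {v, f v} \<in> E)"
proof -
  have "finite (max_degree_vertices V E)"
    using assms(1) by (simp add: simple_graph_def max_degree_vertices_def)
  then show ?thesis
    using Hall_marriage[OF _ Hall_condition_max_degree_vertices[OF assms]]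
    by (simp add: mem_neighbours_iff)
qed

lemma finite_independent_set_cards:
  assumes "finite V"
  shows "finite {card I | I. I \<subseteq> V \<and> independent E I}"
proof (rule finite_subset)
  show "{card I | I. I \<subseteq> V \<and> independent E I} \<subseteq> card ` Pow V"
    by blast
  show "finite (card ` Pow V)"
    using assms by simp
qed

lemma independent_empty: "simple_graph V E \<Longrightarrow> independent E {}"
  unfolding independent_def simple_graph_def by auto

lemma ex_max_independent_set:
  assumes "simple_graph V E"
  shows "\<exists>I \<subseteq> V. independent E I \<and> card I = independence_number V E"
proof -
  define K where "K = {card I | I. I \<subseteq> V \<and> independent E I}"
  have "finite K"
    unfolding K_def using assms by (intro finite_independent_set_cards) (simp add: simple_graph_def)
  moreover have "card {} \<in> K"
    unfolding K_def using independent_empty[OF assms] by (auto intro!: exI[of _ "{}"])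
  ultimately have "Max K \<in> K"
    using Max_in by blast
  then show ?thesis
    unfolding K_def independence_number_def by (blast intro: sym)
qed

lemma es_Delta_le_card: "mitigating V E S \<Longrightarrow> es_Delta V E \<le> card S"
  unfolding es_Delta_def by (rule Least_le) blast

lemma max_degree_K2_subgraph:
  assumes "S \<subseteq> {{0 :: nat, 1}}"
  shows "max_degree {0, 1} S = card S"
proof -
  have "{e \<in> S. v \<in> e} = S" if "v \<in> {0, 1}" for v
    using assms that by auto
  then show ?thesis
    by (simp add: max_degree_def degree_def)
qed

lemma es_Delta_K2: "es_Delta {0 :: nat, 1} {{0, 1}} = 1"
proof -
  let ?E = "{{0 :: nat, 1}}"
  have "mitigating {0, 1} ?E S \<longleftrightarrow> S \<subseteq> ?E \<and> card (?E - S) = 0" for S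
    using max_degree_K2_subgraph[of "?E - S"] max_degree_K2_subgraph[of ?E]
    by (auto simp: mitigating_def)
  then have "mitigating {0, 1} ?E S \<longleftrightarrow> S = ?E" for S
    by auto
  then show ?thesis
    unfolding es_Delta_def by (intro Least_equality) auto
qed

lemma independence_number_K2: "independence_number {0 :: nat, 1} {{0, 1}} = 1"
  unfolding independence_number_def
proof (rule Max_eqI)
  show "finite {card I |I. I \<subseteq> {0 :: nat, 1} \<and> independent {{0, 1}} I}"
    by (rule finite_independent_set_cards) simp
  show "k \<le> 1" if k: "k \<in> {card I |I. I \<subseteq> {0 :: nat, 1} \<and> independent {{0, 1}} I}" for k
  proof -
    obtain I where I: "k = card I" "I \<subseteq> {0 :: nat, 1}" "independent {{0, 1}} I"
      using k by blast
    then have "I \<subset> {0, 1}"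
      by (auto simp: independent_def)
    then show ?thesis
      using I(1) psubset_card_mono[of "{0 :: nat, 1}" I] by simp
  qed
  show "1 \<in> {card I |I. I \<subseteq> {0 :: nat, 1} \<and> independent {{0, 1}} I}"
    by (auto intro!: exI[of _ "{0}"] simp: independent_def)
qed

lemma simple_graph_vertices_nonempty:
  assumes "simple_graph V E" "E \<noteq> {}"
  shows "V \<noteq> {}"
proof -
  obtain e where "e \<in> E"
    using assms(2) by blast
  then have "e \<subseteq> V" "card e = 2"
    using assms(1) by (auto simp: simple_graph_def)
  then show ?thesis
    by auto
qed

lemma mitigating_if_covers_max_degree_vertices_simple_graph:
  assumes "simple_graph V E" "E \<noteq> {}" "S \<subseteq> E" "max_degree_vertices V E \<subseteq> \<Union>S"
  shows "mitigating V E S"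
  using assms(1) simple_graph_vertices_nonempty[OF assms(1,2)] simple_graph_finite_edges[OF assms(1)] assms(3,4)
  by (intro mitigating_if_covers_max_degree_vertices) (simp_all add: simple_graph_def)

lemma edge_endpoints_neq:
  assumes "simple_graph V E" "{v, u} \<in> E"
  shows "u \<noteq> v"
proof -
  have "card {v, u} = 2"
    using assms unfolding simple_graph_def by blast
  then show ?thesis
    by auto
qed

lemma ex_mitigating_path_components:
  assumes "simple_graph V E" "E \<noteq> {}"
  shows "\<exists>S. mitigating V E S \<and>
           (\<forall>C \<in> components (edge_induced_vertices S) S.
              graph_iso C {e \<in> S. e \<subseteq> C} (path_vertices 2) (path_edges 2) \<or>
              graph_iso C {e \<in> S. e \<subseteq> C} (path_vertices 3) (path_edges 3))"
proof -
  define M where "M = max_degree_vertices V E"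
  obtain f where f: "inj_on f M" "\<forall>v\<in>M. {v, f v} \<in> E"
    using ex_inj_neighbour_on_max_degree_vertices[OF assms] by (auto simp: M_def)
  have "finite M"
    using assms(1) by (simp add: M_def max_degree_vertices_def simple_graph_def)
  moreover have "f v \<noteq> v" if "v \<in> M" for v
    using edge_endpoints_neq[OF assms(1)] f(2) that by blast
  ultimately obtain S where S: "S \<subseteq> (\<lambda>v. {v, f v}) ` M" "M \<subseteq> \<Union>S"
    "\<forall>C \<in> components (edge_induced_vertices S) S.
       graph_iso C {e \<in> S. e \<subseteq> C} (path_vertices 2) (path_edges 2) \<or>
       graph_iso C {e \<in> S. e \<subseteq> C} (path_vertices 3) (path_edges 3)"
    using ex_cover_with_path_components[OF _ f(1)] by blast
  have "S \<subseteq> E"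
    using S(1) f(2) by blast
  then have "mitigating V E S"
    using mitigating_if_covers_max_degree_vertices_simple_graph[OF assms] S(2) by (simp add: M_def)
  then show ?thesis
    using S(3) by blast
qed

lemma es_Delta_le_card_minus_independence_number:
  assumes "simple_graph V E" "E \<noteq> {}"
  shows "es_Delta V E \<le> card V - independence_number V E"
proof -
  define M where "M = max_degree_vertices V E"
  have "finite V"
    using assms(1) by (simp add: simple_graph_def)
  obtain f where f: "inj_on f M" "\<forall>v\<in>M. {v, f v} \<in> E"
    using ex_inj_neighbour_on_max_degree_vertices[OF assms] by (auto simp: M_def)
  obtain I where I: "I \<subseteq> V" "independent E I" "card I = independence_number V E"
    using ex_max_independent_set[OF assms(1)] by blast
  have "M \<subseteq> V"
    by (auto simp: M_def max_degree_vertices_def)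
  have "{v, f v} \<subseteq> V" if "v \<in> M" for v
    using assms(1) f(2) that unfolding simple_graph_def by blast
  then have "f ` M \<subseteq> V"
    by blast
  have f_I: "f v \<notin> I" if "v \<in> M \<inter> I" for v
    using I(2) f(2) that by (auto simp: independent_def)
  obtain S where S: "S \<subseteq> (\<lambda>v. {v, f v}) ` M" "M \<subseteq> \<Union>S" "card S \<le> card (V - I)"
    using ex_cover_card_le_card_Diff[OF \<open>finite V\<close> f(1) \<open>M \<subseteq> V\<close> \<open>f ` M \<subseteq> V\<close> f_I] by blast
  have "S \<subseteq> E"
    using S(1) f(2) by blast
  then have "es_Delta V E \<le> card S"
    using mitigating_if_covers_max_degree_vertices_simple_graph[OF assms] S(2)
    by (intro es_Delta_le_card) (simp add: M_def)
  also have "\<dots> \<le> card (V - I)"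
    by (fact S(3))
  also have "\<dots> = card V - independence_number V E"
    using card_Diff_subset[OF finite_subset[OF I(1) \<open>finite V\<close>] I(1)] I(3) by simp
  finally show ?thesis .
qed

lemma es_Delta_bound_attained:
  "\<exists>(V' :: nat set) E'. simple_graph V' E' \<and> E' \<noteq> {} \<and>
     es_Delta V' E' = card V' - independence_number V' E'"
  using es_Delta_K2 independence_number_K2
  by (intro exI[of _ "{0, 1}"] exI[of _ "{{0, 1}}"]) (simp add: simple_graph_def)

theorem theorem2p1:
  fixes V :: "'a set" and E :: "'a set set"
  assumes "simple_graph V E" and "E \<noteq> {}"
  shows "(\<exists>S. mitigating V E S \<and>
            (\<forall>C \<in> components (edge_induced_vertices S) S.
               graph_iso C {e \<in> S. e \<subseteq> C} (path_vertices 2) (path_edges 2) \<or>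
               graph_iso C {e \<in> S. e \<subseteq> C} (path_vertices 3) (path_edges 3)))
       \<and> es_Delta V E \<le> card V - independence_number V E
       \<and> (\<exists>(V' :: nat set) E'. simple_graph V' E' \<and> E' \<noteq> {} \<and>
            es_Delta V' E' = card V' - independence_number V' E')"
  using ex_mitigating_path_components[OF assms] es_Delta_le_card_minus_independence_number[OF assms]
    es_Delta_bound_attained
  by (intro conjI)

end
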